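(* Let $G$ be a graph on $n$ vertices, let $j,r$ be positive integers and let $p=p_r(G)$. Then $\sum_{S\in V(G)^j}|N(S)|^r\ge n^{j+r}p^{jr}$. If moreover $p>4jn^{-1/r}$, then $\sum_{S\in V(G)_j}|N(S)|^r\ge\frac{1}{2^{j+1}}n^{j+r}p^{jr}$.
   Context: All graphs are finite and simple. $p_r(G)=t_{K_{1,r}}(G)^{1/r}=\frac1n\left(\frac1n\sum_{v\in V(G)}d(v)^r\right)^{1/r}$ where $n=|G|$. For a set $W$ and positive integer $k$, $W^k$ is the set of sequences of length $k$ of elements of $W$ (repetitions allowed) and $W_k$ is the set of such sequences whose $k$ elements are pairwise distinct. For a sequence $S$ in $V(G)$, $N(S)$ is the set of vertices adjacent to every vertex of $S$. *)

theory Defs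
  imports "HOL-Analysis.Analysis"
begin

definition simple_graph :: "'a set \<Rightarrow> ('a \<Rightarrow> 'a \<Rightarrow> bool) \<Rightarrow> bool" where
  "simple_graph V E \<longleftrightarrow> finite V \<and> (\<forall>u v. E u v \<longrightarrow> u \<in> V \<and> v \<in> V)
     \<and> (\<forall>u v. E u v \<longrightarrow> E v u) \<and> (\<forall>v. \<not> E v v)"

definition degree :: "'a set \<Rightarrow> ('a \<Rightarrow> 'a \<Rightarrow> bool) \<Rightarrow> 'a \<Rightarrow> nat" where
  "degree V E v = card {u \<in> V. E v u}"

definition p_r :: "nat \<Rightarrow> 'a set \<Rightarrow> ('a \<Rightarrow> 'a \<Rightarrow> bool) \<Rightarrow> real" where
  "p_r r V E = (1 / real (card V)) *
     ((1 / real (card V)) * (\<Sum>v\<in>V. real (degree V E v) ^ r)) powr (1 / real r)"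

definition seqs :: "'a set \<Rightarrow> nat \<Rightarrow> 'a list set" where
  "seqs W k = {S. length S = k \<and> set S \<subseteq> W}"

definition dseqs :: "'a set \<Rightarrow> nat \<Rightarrow> 'a list set" where
  "dseqs W k = {S. length S = k \<and> set S \<subseteq> W \<and> distinct S}"

definition common_nbhd :: "'a set \<Rightarrow> ('a \<Rightarrow> 'a \<Rightarrow> bool) \<Rightarrow> 'a list \<Rightarrow> 'a set" where
  "common_nbhd V E S = {v \<in> V. \<forall>u\<in>set S. E u v}"

end

theory Submission
  imports Defs
begin

(* Counting pairs (S, T) in V^j x V^r with every vertex of S adjacent to every vertex of T
   in two ways gives sum_S |N(S)|^r = sum_T |N(T)|^j, and for j = 1 the right-hand side is
   sum_v d(v)^r = n^(r+1) p^r.  So the average of |N(T)| over the n^r sequences T is n p^r,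
   and the power mean inequality yields the first bound.  Restricting S to distinct sequences
   replaces |N(T)|^j by the number of distinct j-sequences in N(T), which is at least
   (|N(T)|^j - (2j)^j) / 2^j; when n p^r >= 4j the loss (2j)^j is at most half of the
   j-th power of the average, giving the second bound. *)

lemma power_mean_le_sum_power:
  fixes f :: "'b \<Rightarrow> real"
  assumes "finite X" and "\<And>x. x \<in> X \<Longrightarrow> 0 \<le> f x"
  shows "card X * ((\<Sum>x\<in>X. f x) / card X) ^ k \<le> (\<Sum>x\<in>X. f x ^ k)"
proof (cases "X = {}")
  case True
  then show ?thesis by simp
next
  case False
  let ?c = "real (card X)"
  have c: "?c > 0"
    using assms(1) False by (simp add: card_gt_0_iff)
  have convex: "convex_on {0..} (\<lambda>x::real. x ^ k)"
    by (cases "even k") (auto intro: convex_on_subset[OF convex_power_even] convex_power_odd)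
  have "((\<Sum>x\<in>X. f x) / ?c) ^ k = (\<Sum>x\<in>X. (1 / ?c) *\<^sub>R f x) ^ k"
    by (simp add: sum_divide_distrib)
  also have "\<dots> \<le> (\<Sum>x\<in>X. (1 / ?c) * f x ^ k)"
    by (rule convex_on_sum[OF assms(1) False convex]) (use c assms(2) in auto)
  also have "\<dots> = (\<Sum>x\<in>X. f x ^ k) / ?c"
    by (simp add: sum_divide_distrib)
  finally show ?thesis
    using c by (simp add: field_simps)
qed

lemma powr_inverse_power:
  fixes x :: real
  assumes "0 \<le> x" and "r \<ge> 1"
  shows "(x powr (1 / real r)) ^ r = x"
  using assms by (cases "x = 0") (simp_all add: powr_power)

lemma finite_seqs: "finite A \<Longrightarrow> finite (seqs A k)"
  unfolding seqs_def using finite_lists_length_eq[of A k] by (simp add: conj_commute)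

lemma finite_dseqs: "finite A \<Longrightarrow> finite (dseqs A k)"
  by (rule finite_subset[OF _ finite_seqs[of A k]]) (auto simp: seqs_def dseqs_def)

lemma card_seqs: "finite A \<Longrightarrow> card (seqs A k) = card A ^ k"
  unfolding seqs_def using card_lists_length_eq[of A k] by (simp add: conj_commute)

lemma card_dseqs_ge:
  assumes "finite A" and "k \<le> card A"
  shows "(card A - k + 1) ^ k \<le> card (dseqs A k)"
proof -
  have "(card A - k + 1) ^ k = (\<Prod>i\<in>{card A - k + 1 .. card A}. card A - k + 1)"
    using assms(2) by simp
  also have "\<dots> \<le> \<Prod>{card A - k + 1 .. card A}"
    by (rule prod_mono) simp
  also have "\<dots> = card (dseqs A k)"
    using card_lists_distinct_length_eq[OF assms] unfolding dseqs_def by (simp add: conj_ac)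
  finally show ?thesis .
qed

lemma card_dseqs_ge_power_minus:
  assumes "finite A"
  shows "real (card A) ^ k - (2 * real k) ^ k \<le> 2 ^ k * real (card (dseqs A k))"
proof (cases "2 * k \<le> card A")
  case True
  have "(card A - k + 1) ^ k \<le> card (dseqs A k)"
    using True by (intro card_dseqs_ge assms) simp
  then have dseqs: "real (card A - k + 1) ^ k \<le> real (card (dseqs A k))"
    by (simp only: of_nat_power[symmetric] of_nat_le_iff)
  have "real (card A) ^ k = 2 ^ k * (real (card A) / 2) ^ k"
    by (simp add: power_divide)
  also have "\<dots> \<le> 2 ^ k * real (card A - k + 1) ^ k"
    using True by (intro mult_left_mono power_mono) (simp_all add: of_nat_diff)
  also have "\<dots> \<le> 2 ^ k * real (card (dseqs A k))"
    using dseqs by (rule mult_left_mono) simp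
  finally show ?thesis
    using zero_le_power[of "2 * real k" k] by linarith
next
  case False
  then have "real (card A) ^ k \<le> (2 * real k) ^ k"
    by (intro power_mono) simp_all
  moreover have "0 \<le> 2 ^ k * real (card (dseqs A k))"
    by simp
  ultimately show ?thesis
    by linarith
qed

lemma sum_card_dseqs_ge:
  fixes X :: "'b set" and N :: "'b \<Rightarrow> 'a set" and \<mu> :: real
  defines "\<mu> \<equiv> (\<Sum>T\<in>X. real (card (N T))) / real (card X)"
  assumes "finite X" and "\<And>T. T \<in> X \<Longrightarrow> finite (N T)"
    and "j \<ge> 1" and "4 * real j \<le> \<mu>"
  shows "card X * \<mu> ^ j / 2 ^ (j + 1) \<le> (\<Sum>T\<in>X. real (card (dseqs (N T) j)))"
proof -
  have "2 * (2 * real j) ^ j \<le> 2 ^ j * (2 * real j) ^ j"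
    using \<open>j \<ge> 1\<close> by (intro mult_right_mono) (auto simp: self_le_power)
  also have "\<dots> = (4 * real j) ^ j"
    by (subst power_mult_distrib[symmetric]) simp
  also have "\<dots> \<le> \<mu> ^ j"
    using \<open>4 * real j \<le> \<mu>\<close> by (intro power_mono) auto
  finally have loss: "card X * (2 * real j) ^ j \<le> card X * \<mu> ^ j / 2"
    using mult_left_mono[of "2 * (2 * real j) ^ j" "\<mu> ^ j" "card X"] by simp
  have "card X * \<mu> ^ j \<le> (\<Sum>T\<in>X. real (card (N T)) ^ j)"
    unfolding \<mu>_def using \<open>finite X\<close> by (rule power_mean_le_sum_power) simp
  also have "\<dots> - card X * (2 * real j) ^ j
      = (\<Sum>T\<in>X. real (card (N T)) ^ j - (2 * real j) ^ j)"
    by (simp add: sum_subtractf)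
  also have "\<dots> \<le> (\<Sum>T\<in>X. 2 ^ j * real (card (dseqs (N T) j)))"
    using assms(3) by (intro sum_mono card_dseqs_ge_power_minus)
  finally have "card X * \<mu> ^ j / 2 \<le> 2 ^ j * (\<Sum>T\<in>X. real (card (dseqs (N T) j)))"
    using loss by (simp only: sum_distrib_left) linarith
  then show ?thesis
    by (simp add: divide_le_eq mult.commute)
qed

lemma seqs_common_nbhd:
  "seqs (common_nbhd V E S) r = {T \<in> seqs V r. set T \<subseteq> common_nbhd V E S}"
  by (auto simp: seqs_def common_nbhd_def)

lemma dseqs_common_nbhd:
  "dseqs (common_nbhd V E S) r = {T \<in> dseqs V r. set T \<subseteq> common_nbhd V E S}"
  by (auto simp: dseqs_def common_nbhd_def)

context
  fixes V :: "'a set" and E :: "'a \<Rightarrow> 'a \<Rightarrow> bool"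
  assumes graph: "simple_graph V E"
begin

lemma finite_vertices: "finite V"
  using graph by (simp add: simple_graph_def)

lemma finite_common_nbhd: "finite (common_nbhd V E S)"
  using finite_vertices by (simp add: common_nbhd_def)

lemma subset_common_nbhd_commute:
  assumes "set S \<subseteq> V" and "set T \<subseteq> V"
  shows "set S \<subseteq> common_nbhd V E T \<longleftrightarrow> set T \<subseteq> common_nbhd V E S"
  using graph assms by (auto simp: common_nbhd_def simple_graph_def)

lemma sum_card_common_nbhd_power:
  assumes "finite \<S>" and "\<And>S. S \<in> \<S> \<Longrightarrow> set S \<subseteq> V"
  shows "(\<Sum>S\<in>\<S>. card (common_nbhd V E S) ^ r)
       = (\<Sum>T\<in>seqs V r. card {S \<in> \<S>. set S \<subseteq> common_nbhd V E T})"
proof -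
  have "card (common_nbhd V E S) ^ r = card {T \<in> seqs V r. set S \<subseteq> common_nbhd V E T}"
    if "S \<in> \<S>" for S
  proof -
    have "{T \<in> seqs V r. set S \<subseteq> common_nbhd V E T}
        = {T \<in> seqs V r. set T \<subseteq> common_nbhd V E S}"
      using subset_common_nbhd_commute assms(2)[OF that] unfolding seqs_def by blast
    then show ?thesis
      by (simp add: seqs_common_nbhd[symmetric] card_seqs finite_common_nbhd)
  qed
  then show ?thesis
    using sum_multicount_gen[OF assms(1) finite_seqs[OF finite_vertices]] by simp
qed

lemma sum_seqs_card_common_nbhd_power_swap:
  "(\<Sum>S\<in>seqs V j. card (common_nbhd V E S) ^ r)
 = (\<Sum>T\<in>seqs V r. card (common_nbhd V E T) ^ j)"
proof -
  have "(\<Sum>S\<in>seqs V j. card (common_nbhd V E S) ^ r)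
      = (\<Sum>T\<in>seqs V r. card {S \<in> seqs V j. set S \<subseteq> common_nbhd V E T})"
    by (rule sum_card_common_nbhd_power[OF finite_seqs[OF finite_vertices]]) (simp add: seqs_def)
  also have "\<dots> = (\<Sum>T\<in>seqs V r. card (seqs (common_nbhd V E T) j))"
    by (simp add: seqs_common_nbhd)
  finally show ?thesis
    by (simp add: card_seqs finite_common_nbhd)
qed

lemma sum_dseqs_card_common_nbhd_power:
  "(\<Sum>S\<in>dseqs V j. card (common_nbhd V E S) ^ r)
 = (\<Sum>T\<in>seqs V r. card (dseqs (common_nbhd V E T) j))"
proof -
  have "(\<Sum>S\<in>dseqs V j. card (common_nbhd V E S) ^ r)
      = (\<Sum>T\<in>seqs V r. card {S \<in> dseqs V j. set S \<subseteq> common_nbhd V E T})"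
    by (rule sum_card_common_nbhd_power[OF finite_dseqs[OF finite_vertices]]) (simp add: dseqs_def)
  also have "\<dots> = (\<Sum>T\<in>seqs V r. card (dseqs (common_nbhd V E T) j))"
    by (simp add: dseqs_common_nbhd)
  finally show ?thesis .
qed

lemma sum_seqs_card_common_nbhd:
  "(\<Sum>T\<in>seqs V r. card (common_nbhd V E T)) = (\<Sum>v\<in>V. degree V E v ^ r)"
proof -
  have "seqs V 1 = (\<lambda>v. [v]) ` V"
    by (auto simp: seqs_def length_Suc_conv)
  moreover have "card (common_nbhd V E [v]) = degree V E v" for v
    using graph
    by (auto simp: common_nbhd_def degree_def simple_graph_def intro!: arg_cong[where f = card])
  ultimately show ?thesis
    using sum_seqs_card_common_nbhd_power_swap[of 1 r] by (simp add: sum.reindex inj_on_def)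
qed

end

lemma p_r_power:
  assumes "finite V" and "r \<ge> 1"
  shows "real (card V) ^ (r + 1) * p_r r V E ^ r = (\<Sum>v\<in>V. real (degree V E v) ^ r)"
proof (cases "V = {}")
  case True
  then show ?thesis by simp
next
  case False
  let ?n = "real (card V)" and ?D = "\<Sum>v\<in>V. real (degree V E v) ^ r"
  have n: "?n > 0"
    using assms(1) False by (simp add: card_gt_0_iff)
  have "p_r r V E ^ r = (1 / ?n) ^ r * (?D / ?n)"
    unfolding p_r_def power_mult_distrib using assms(2)
    by (subst powr_inverse_power) (simp_all add: sum_nonneg)
  then show ?thesis
    using n by (simp add: power_divide field_simps)
qed

lemma p_r_threshold:
  assumes "r \<ge> 1" and "1 \<le> c" and "c * real (card V) powr (- 1 / real r) < p_r r V E"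
  shows "c \<le> real (card V) * p_r r V E ^ r"
proof -
  let ?n = "real (card V)" and ?p = "p_r r V E"
  have n: "?n > 0"
    using assms(3) by (cases "card V = 0") (auto simp: p_r_def)
  have "(?n powr (- 1 / real r)) ^ r = ?n powr (real r * (- 1 / real r))"
    using n by (simp add: powr_power)
  also have "\<dots> = 1 / ?n"
    using n assms(1) by (simp add: powr_neg_one)
  finally have inverse: "(?n powr (- 1 / real r)) ^ r = 1 / ?n" .
  have "c ^ r / ?n = (c * ?n powr (- 1 / real r)) ^ r"
    using inverse by (simp add: power_mult_distrib)
  also have "\<dots> < ?p ^ r"
    using assms by (intro power_strict_mono) auto
  finally have "c ^ r < ?n * ?p ^ r"
    using n by (simp add: divide_less_eq mult.commute)
  moreover have "c \<le> c ^ r"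
    using assms(1,2) by (simp add: self_le_power)
  ultimately show ?thesis
    by linarith
qed

theorem lemma3p5:
  fixes V :: "'a set" and E :: "'a \<Rightarrow> 'a \<Rightarrow> bool" and j r :: nat
  assumes "simple_graph V E" and "j \<ge> 1" and "r \<ge> 1"
  shows "(\<Sum>S\<in>seqs V j. real (card (common_nbhd V E S)) ^ r)
           \<ge> real (card V) ^ (j + r) * p_r r V E ^ (j * r)
       \<and> (p_r r V E > 4 * real j * real (card V) powr (- 1 / real r) \<longrightarrow>
         (\<Sum>S\<in>dseqs V j. real (card (common_nbhd V E S)) ^ r)
           \<ge> 1 / 2 ^ (j + 1) * real (card V) ^ (j + r) * p_r r V E ^ (j * r))"
proof -
  let ?n = "real (card V)" and ?p = "p_r r V E" and ?N = "common_nbhd V E" and ?X = "seqs V r"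
  define \<mu> where "\<mu> = (\<Sum>T\<in>?X. real (card (?N T))) / real (card ?X)"
  have V: "finite V"
    using assms(1) by (rule finite_vertices)
  have card_X: "card ?X = card V ^ r"
    using V by (rule card_seqs)
  have "(\<Sum>T\<in>?X. real (card (?N T))) = (\<Sum>v\<in>V. real (degree V E v) ^ r)"
    using arg_cong[where f = real, OF sum_seqs_card_common_nbhd[OF assms(1), where r = r]]
    by simp
  also have "\<dots> = ?n ^ (r + 1) * ?p ^ r"
    using p_r_power[OF V assms(3)] by simp
  finally have \<mu>: "\<mu> = ?n * ?p ^ r"
    unfolding \<mu>_def card_X by (cases "card V = 0") (simp_all add: power_add)
  have "?p ^ (j * r) = (?p ^ r) ^ j"
    by (subst mult.commute) (rule power_mult)
  then have target: "?n ^ (j + r) * ?p ^ (j * r) = card ?X * \<mu> ^ j"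
    unfolding \<mu> card_X by (simp add: power_add power_mult_distrib)
  show ?thesis
  proof (intro conjI impI)
    have "card ?X * \<mu> ^ j \<le> (\<Sum>T\<in>?X. real (card (?N T)) ^ j)"
      unfolding \<mu>_def by (rule power_mean_le_sum_power) (simp_all add: finite_seqs V)
    also have "\<dots> = (\<Sum>S\<in>seqs V j. real (card (?N S)) ^ r)"
      using arg_cong[where f = real,
          OF sum_seqs_card_common_nbhd_power_swap[OF assms(1), where j = j and r = r]]
      by simp
    finally show "?n ^ (j + r) * ?p ^ (j * r) \<le> (\<Sum>S\<in>seqs V j. real (card (?N S)) ^ r)"
      unfolding target .
  next
    assume "?p > 4 * real j * ?n powr (- 1 / real r)"
    then have "4 * real j \<le> \<mu>"
      unfolding \<mu> using assms(2,3) by (intro p_r_threshold) auto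
    then have "card ?X * \<mu> ^ j / 2 ^ (j + 1) \<le> (\<Sum>T\<in>?X. real (card (dseqs (?N T) j)))"
      unfolding \<mu>_def using assms(2)
      by (intro sum_card_dseqs_ge) (simp_all add: finite_seqs V finite_common_nbhd[OF assms(1)])
    also have "\<dots> = (\<Sum>S\<in>dseqs V j. real (card (?N S)) ^ r)"
      using arg_cong[where f = real,
          OF sum_dseqs_card_common_nbhd_power[OF assms(1), where j = j and r = r]]
      by simp
    finally show "1 / 2 ^ (j + 1) * ?n ^ (j + r) * ?p ^ (j * r)
        \<le> (\<Sum>S\<in>dseqs V j. real (card (?N S)) ^ r)"
      by (simp add: target)
  qed
qed

end
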